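(* Let $h\ge 0$ and $0\le i\le h$, and let $g_i^{(h)}(z)=\sum_{n\ge0}b^{(h)}_{n,i}z^n$, where $b^{(h)}_{n,i}$ is the number of reversed partial ternary paths of length $n$ ending at level $i$ all of whose ordinates are at most $h$. Then $$(-1)^i g_i^{(h)}(z)=\frac{d_{h-i}}{d_{h+1}}\,w_i-z^2\,\frac{d_{h-i-1}}{d_{h+1}}\,w_{i-1},$$ where $\sum_{j\ge0}d_jX^j=\dfrac{1}{1-X+z^3X^3}$, $\sum_{n\ge 0}w_nX^n=\dfrac{1}{1-zX^2+z^3X^3}$, and $w_{-1}=0$, $d_{-1}=0$.
   Context: A reversed partial ternary path of length $n$ is a lattice path $(0,c_0),\dots,(n,c_n)$ with $c_0=0$, steps $(1,2)$ or $(1,-1)$, and all $c_j\ge0$; it ends at level $c_n$. *)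

theory Defs
  imports "HOL-Computational_Algebra.Formal_Power_Series"
begin

definition bounded_paths :: "nat \<Rightarrow> nat \<Rightarrow> nat \<Rightarrow> (nat \<Rightarrow> int) set" where
  "bounded_paths h n i = {c. c 0 = 0
      \<and> (\<forall>j<n. c (Suc j) - c j = 2 \<or> c (Suc j) - c j = -1)
      \<and> (\<forall>j\<le>n. 0 \<le> c j \<and> c j \<le> int h)
      \<and> c n = int i
      \<and> (\<forall>j>n. c j = 0)}"

definition b_count :: "nat \<Rightarrow> nat \<Rightarrow> nat \<Rightarrow> nat" where
  "b_count h n i = card (bounded_paths h n i)"

definition g_gf :: "nat \<Rightarrow> nat \<Rightarrow> rat fps" where
  "g_gf h i = Abs_fps (\<lambda>n. of_nat (b_count h n i))"

text \<open>Generating functions in X whose coefficients are formal power series in z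
  (z = fps_X :: rat fps, X = fps_X :: rat fps fps).\<close>
definition D_gf :: "rat fps fps" where
  "D_gf = inverse (1 - fps_X + fps_const (fps_X ^ 3) * fps_X ^ 3)"

definition W_gf :: "rat fps fps" where
  "W_gf = inverse (1 - fps_const fps_X * fps_X ^ 2 + fps_const (fps_X ^ 3) * fps_X ^ 3)"

definition dd :: "int \<Rightarrow> rat fps" where
  "dd j = (if j < 0 then 0 else fps_nth D_gf (nat j))"

definition ww :: "int \<Rightarrow> rat fps" where
  "ww j = (if j < 0 then 0 else fps_nth W_gf (nat j))"

end

theory Submission
  imports Defs
begin

text \<open>Sorting paths by their last step, the series g_k = g_k^(h) satisfy
  g_k = [k = 0] + z g_(k-2) + z g_(k+1) for 0 <= k <= h, with g_k = 0 for all other k;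
  comparing coefficients of z^n shows that this system has only one solution.
  The denominators of the two generating functions give d_j = d_(j-1) - z^3 d_(j-3) and
  w_j = z w_(j-2) - z^3 w_(j-3), and with these the signed right-hand side of the theorem
  is checked to solve the same system.\<close>

unbundle fps_syntax

lemma fps_mult_inverse_eq_1:
  fixes f :: "'a::{ring_1,inverse} fps"
  assumes "f $ 0 * inverse (f $ 0) = 1"
  shows "f * inverse f = 1"
  using fps_right_inverse[OF assms] by (simp add: fps_inverse_def)

lemma D_gf_equation: "(1 - fps_X + fps_const (fps_X ^ 3) * fps_X ^ 3) * D_gf = 1"
  unfolding D_gf_def by (rule fps_mult_inverse_eq_1) simp

lemma W_gf_equation: "(1 - fps_const fps_X * fps_X ^ 2 + fps_const (fps_X ^ 3) * fps_X ^ 3) * W_gf = 1"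
  unfolding W_gf_def by (rule fps_mult_inverse_eq_1) (simp add: numeral_eq_Suc)

lemma dd_neg: "j < 0 \<Longrightarrow> dd j = 0"
  unfolding dd_def by simp

lemma ww_neg: "j < 0 \<Longrightarrow> ww j = 0"
  unfolding ww_def by simp

lemma dd_0: "dd 0 = 1"
  unfolding dd_def D_gf_def by simp

lemma ww_0: "ww 0 = 1"
  unfolding ww_def W_gf_def by (simp add: numeral_eq_Suc)

lemma dd_rec:
  assumes "1 \<le> j"
  shows "dd j = dd (j - 1) - fps_X ^ 3 * dd (j - 3)"
proof -
  have "(D_gf - fps_X * D_gf + fps_const (fps_X ^ 3) * (fps_X ^ 3 * D_gf)) $ nat j = 0"
    using D_gf_equation assms by (simp add: algebra_simps)
  then have "D_gf $ nat j - D_gf $ (nat j - 1)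
      + fps_X ^ 3 * (if nat j < 3 then 0 else D_gf $ (nat j - 3)) = 0"
    using assms by (simp add: fps_X_power_mult_nth)
  moreover have "nat (j - 1) = nat j - 1" "nat (j - 3) = nat j - 3" "nat j < 3 \<longleftrightarrow> j < 3"
    using assms by auto
  ultimately show ?thesis
    using assms unfolding dd_def by (auto simp: algebra_simps)
qed

lemma ww_rec:
  assumes "1 \<le> j"
  shows "ww j = fps_X * ww (j - 2) - fps_X ^ 3 * ww (j - 3)"
proof -
  have "(W_gf - fps_const fps_X * (fps_X ^ 2 * W_gf) + fps_const (fps_X ^ 3) * (fps_X ^ 3 * W_gf)) $ nat j = 0"
    using W_gf_equation assms by (simp add: algebra_simps)
  then have "W_gf $ nat j - fps_X * (if nat j < 2 then 0 else W_gf $ (nat j - 2))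
      + fps_X ^ 3 * (if nat j < 3 then 0 else W_gf $ (nat j - 3)) = 0"
    using assms by (simp add: fps_X_power_mult_nth)
  moreover have "nat (j - 2) = nat j - 2" "nat (j - 3) = nat j - 3"
      "nat j < 3 \<longleftrightarrow> j < 3" "nat j < 2 \<longleftrightarrow> j < 2"
    using assms by auto
  ultimately show ?thesis
    using assms unfolding ww_def by (auto simp: algebra_simps)
qed

lemma dd_nth_0: "0 \<le> j \<Longrightarrow> dd j $ 0 = 1"
proof (induction j rule: int_ge_induct)
  case base
  then show ?case by (simp add: dd_0)
next
  case (step j)
  then show ?case
    using dd_rec[of "j + 1"] by (simp add: fps_X_power_mult_nth)
qed

definition solves_path_system :: "nat \<Rightarrow> (int \<Rightarrow> 'a::comm_ring_1 fps) \<Rightarrow> bool" where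
  "solves_path_system h F \<longleftrightarrow>
     (\<forall>k. k < 0 \<or> int h < k \<longrightarrow> F k = 0) \<and>
     (\<forall>k. 0 \<le> k \<and> k \<le> int h \<longrightarrow>
        F k = (if k = 0 then 1 else 0) + fps_X * F (k - 2) + fps_X * F (k + 1))"

lemma path_system_unique:
  assumes F: "solves_path_system h F" and G: "solves_path_system h G"
  shows "F = G"
proof -
  have "F k $ n = G k $ n" for k n
  proof (induction n arbitrary: k)
    case 0
    then show ?case
      using F G unfolding solves_path_system_def by (cases "0 \<le> k \<and> k \<le> int h") auto
  next
    case (Suc n)
    then show ?case
      using F G unfolding solves_path_system_def by (cases "0 \<le> k \<and> k \<le> int h") auto
  qed
  then show ?thesis
    by (auto intro: fps_ext)
qed

definition bounded_paths_to :: "nat \<Rightarrow> nat \<Rightarrow> int \<Rightarrow> (nat \<Rightarrow> int) set" where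
  "bounded_paths_to h n k = {c. c 0 = 0
      \<and> (\<forall>j<n. c (Suc j) - c j = 2 \<or> c (Suc j) - c j = -1)
      \<and> (\<forall>j\<le>n. 0 \<le> c j \<and> c j \<le> int h)
      \<and> c n = k
      \<and> (\<forall>j>n. c j = 0)}"

lemma bounded_paths_eq_bounded_paths_to: "bounded_paths h n i = bounded_paths_to h n (int i)"
  unfolding bounded_paths_def bounded_paths_to_def ..

lemma bounded_paths_to_outside: "k < 0 \<or> int h < k \<Longrightarrow> bounded_paths_to h n k = {}"
  unfolding bounded_paths_to_def by force

lemma bounded_paths_to_0: "bounded_paths_to h 0 k = (if k = 0 then {\<lambda>_. 0} else {})"
  unfolding bounded_paths_to_def by (auto intro!: ext) (metis neq0_conv)

lemma bounded_paths_to_Suc: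
  assumes "0 \<le> k" "k \<le> int h"
  shows "bounded_paths_to h (Suc n) k
           = (\<lambda>c. c(Suc n := k)) ` (bounded_paths_to h n (k - 2) \<union> bounded_paths_to h n (k + 1))"
    (is "?P = ?extend ` ?Q")
proof
  show "?P \<subseteq> ?extend ` ?Q"
  proof
    fix c assume c: "c \<in> ?P"
    then have "c(Suc n := 0) \<in> ?Q" and "c = ?extend (c(Suc n := 0))"
      unfolding bounded_paths_to_def by (auto simp: add.commute)
    then show "c \<in> ?extend ` ?Q" by blast
  qed
next
  show "?extend ` ?Q \<subseteq> ?P"
    using assms unfolding bounded_paths_to_def by (auto simp: less_Suc_eq le_Suc_eq)
qed

lemma finite_bounded_paths_to: "finite (bounded_paths_to h n k)"
proof (induction n arbitrary: k)
  case 0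
  then show ?case by (simp add: bounded_paths_to_0)
next
  case (Suc n)
  then show ?case
    using bounded_paths_to_outside[of k h "Suc n"]
    by (cases "0 \<le> k \<and> k \<le> int h") (auto simp: bounded_paths_to_Suc)
qed

lemma card_bounded_paths_to_Suc:
  assumes "0 \<le> k" "k \<le> int h"
  shows "card (bounded_paths_to h (Suc n) k)
           = card (bounded_paths_to h n (k - 2)) + card (bounded_paths_to h n (k + 1))"
proof -
  let ?Q = "bounded_paths_to h n (k - 2) \<union> bounded_paths_to h n (k + 1)"
  have "inj_on (\<lambda>c. c(Suc n := k)) ?Q"
  proof (rule inj_onI)
    fix c c' assume "c \<in> ?Q" "c' \<in> ?Q" and eq: "c(Suc n := k) = c'(Suc n := k)"
    then have "c (Suc n) = 0" "c' (Suc n) = 0"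
      unfolding bounded_paths_to_def by auto
    then show "c = c'"
      using eq by (metis fun_upd_triv fun_upd_upd)
  qed
  moreover have "bounded_paths_to h n (k - 2) \<inter> bounded_paths_to h n (k + 1) = {}"
    unfolding bounded_paths_to_def by auto
  ultimately show ?thesis
    using assms by (simp add: bounded_paths_to_Suc card_image card_Un_disjoint finite_bounded_paths_to)
qed

definition path_count_gf :: "nat \<Rightarrow> int \<Rightarrow> 'a::comm_ring_1 fps" where
  "path_count_gf h k = Abs_fps (\<lambda>n. of_nat (card (bounded_paths_to h n k)))"

lemma path_count_gf_solves: "solves_path_system h (path_count_gf h)"
  unfolding solves_path_system_def
proof (intro conjI allI impI)
  fix k assume "k < 0 \<or> int h < k"
  then show "path_count_gf h k = 0"
    by (simp add: path_count_gf_def bounded_paths_to_outside fps_zero_def)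
next
  fix k assume k: "0 \<le> k \<and> k \<le> int h"
  show "path_count_gf h k
      = (if k = 0 then 1 else 0) + fps_X * path_count_gf h (k - 2) + fps_X * path_count_gf h (k + 1)"
  proof (rule fps_ext)
    fix n show "path_count_gf h k $ n = ((if k = 0 then 1 else 0)
        + fps_X * path_count_gf h (k - 2) + fps_X * path_count_gf h (k + 1)) $ n"
      using k by (cases n) (simp_all add: path_count_gf_def bounded_paths_to_0 card_bounded_paths_to_Suc)
  qed
qed

definition rhs_numerator :: "nat \<Rightarrow> int \<Rightarrow> rat fps" where
  "rhs_numerator h k = dd (int h - k) * ww k - fps_X ^ 2 * dd (int h - k - 1) * ww (k - 1)"

lemma rhs_numerator_eq_0: "k < 0 \<or> int h < k \<Longrightarrow> rhs_numerator h k = 0"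
  unfolding rhs_numerator_def by (auto simp: dd_neg ww_neg)

lemma rhs_numerator_rec:
  assumes "0 \<le> k" "k \<le> int h"
  shows "rhs_numerator h k - fps_X * rhs_numerator h (k - 2) + fps_X * rhs_numerator h (k + 1)
           = (if k = 0 then dd (int h + 1) else 0)"
proof -
  define j where "j = int h - k"
  have "0 \<le> j" using assms j_def by simp
  have w1: "ww (k + 1) = fps_X * ww (k - 1) - fps_X ^ 3 * ww (k - 2)"
    using ww_rec[of "k + 1"] assms by (simp add: algebra_simps)
  have w2: "fps_X * ww (k - 2) - fps_X ^ 3 * ww (k - 3) = ww k - (if k = 0 then 1 else 0)"
    using ww_rec[of k] assms by (cases "k = 0") (simp_all add: ww_neg ww_0)
  have d1: "dd (j + 2) = dd (j + 1) - fps_X ^ 3 * dd (j - 1)"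
    using dd_rec[of "j + 2"] \<open>0 \<le> j\<close> by (simp add: algebra_simps)
  have d2: "dd (j + 1) = dd j - fps_X ^ 3 * dd (j - 2)"
    using dd_rec[of "j + 1"] \<open>0 \<le> j\<close> by (simp add: algebra_simps)
  have "rhs_numerator h k = dd j * ww k - fps_X ^ 2 * dd (j - 1) * ww (k - 1)"
    and "rhs_numerator h (k - 2) = dd (j + 2) * ww (k - 2) - fps_X ^ 2 * dd (j + 1) * ww (k - 3)"
    and "rhs_numerator h (k + 1) = dd (j - 1) * ww (k + 1) - fps_X ^ 2 * dd (j - 2) * ww k"
    and "(if k = 0 then dd (int h + 1) else 0) = (if k = 0 then 1 else 0) * dd (j + 1)"
    unfolding rhs_numerator_def j_def by (simp_all add: algebra_simps)
  then show ?thesis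
    using w1 w2 d1 d2 by algebra
qed

definition closed_form :: "nat \<Rightarrow> int \<Rightarrow> rat fps" where
  "closed_form h k = (-1) ^ nat k * rhs_numerator h k * inverse (dd (int h + 1))"

lemma closed_form_solves: "solves_path_system h (closed_form h)"
  unfolding solves_path_system_def
proof (intro conjI allI impI)
  fix k assume "k < 0 \<or> int h < k"
  then show "closed_form h k = 0"
    by (simp add: closed_form_def rhs_numerator_eq_0)
next
  fix k assume k: "0 \<le> k \<and> k \<le> int h"
  define s :: "rat fps" where "s = (-1) ^ nat k"
  define I where "I = inverse (dd (int h + 1))"
  have "dd (int h + 1) * I = 1"
    unfolding I_def by (rule inverse_mult_eq_1') (simp add: dd_nth_0)
  have "closed_form h k = s * rhs_numerator h k * I"
    by (simp add: closed_form_def s_def I_def)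
  moreover have "closed_form h (k - 2) = s * rhs_numerator h (k - 2) * I"
  proof (cases "2 \<le> k")
    case True
    then have "nat k = Suc (Suc (nat (k - 2)))" by simp
    then show ?thesis by (simp add: closed_form_def s_def I_def)
  next
    case False
    then show ?thesis by (simp add: closed_form_def rhs_numerator_eq_0)
  qed
  moreover have "closed_form h (k + 1) = - s * rhs_numerator h (k + 1) * I"
    using k by (simp add: closed_form_def s_def I_def nat_add_distrib)
  ultimately have "closed_form h k - fps_X * closed_form h (k - 2) - fps_X * closed_form h (k + 1)
      = s * I * (rhs_numerator h k - fps_X * rhs_numerator h (k - 2) + fps_X * rhs_numerator h (k + 1))"
    by (simp add: algebra_simps)
  also have "\<dots> = (if k = 0 then 1 else 0)"
    using rhs_numerator_rec[of k h] k \<open>dd (int h + 1) * I = 1\<close> by (simp add: s_def mult.commute)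
  finally show "closed_form h k
      = (if k = 0 then 1 else 0) + fps_X * closed_form h (k - 2) + fps_X * closed_form h (k + 1)"
    by (simp add: algebra_simps)
qed

theorem mainTheorem6:
  fixes h i :: nat
  assumes "i \<le> h"
  shows "(-1) ^ i * g_gf h i =
           dd (int h - int i) / dd (int h + 1) * ww (int i)
         - fps_X ^ 2 * (dd (int h - int i - 1) / dd (int h + 1)) * ww (int i - 1)"
proof -
  have "g_gf h i = path_count_gf h (int i)"
    by (simp add: g_gf_def path_count_gf_def b_count_def bounded_paths_eq_bounded_paths_to)
  also have "\<dots> = closed_form h (int i)"
    using path_system_unique[OF path_count_gf_solves closed_form_solves] by simp
  finally have "(-1) ^ i * g_gf h i = rhs_numerator h (int i) * inverse (dd (int h + 1))"
    by (simp add: closed_form_def flip: power_mult_distrib)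
  also have "\<dots> = dd (int h - int i) / dd (int h + 1) * ww (int i)
         - fps_X ^ 2 * (dd (int h - int i - 1) / dd (int h + 1)) * ww (int i - 1)"
    by (simp add: fps_divide_unit dd_nth_0 rhs_numerator_def algebra_simps)
  finally show ?thesis .
qed

end
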